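(* Fix $\Delta x>0$, $\sigma\in\mathbb R$ and arbitrary complex coefficients $C_{lj}$ ($j\in\mathbb Z$, $l\in N(j)$). Let $\mathcal K_1$ be the set of $\mathbb K\in\mathbb R$ for which there exists $A>0$ such that, with $\mu=\frac12\mathbb K^2$, the discrete stochastic plane wave $u_j(t)=A\,e^{\mathbf i(\mathbb K x_j-\mu t-\sigma W(t))}$, $j\in\mathbb Z$, solves (L1). Let $\mathcal K_2$ be the set of $\mathbb K\in\mathbb R$ for which there exists $A>0$ such that, with $\mu=\frac12\mathbb K^2$, the wave $u_j(t)=A\,e^{\mathbf i(\mathbb K x_j-\mu W(t))}$, $j\in\mathbb Z$, solves (L2). Then $\mathcal K_1$ and $\mathcal K_2$ are finite. In other words, a linear discretization admits at most finitely many pairs $(\mu,\mathbb K)$ with $\mu=\frac12|\mathbb K|^2$ for which the discrete stochastic plane wave is a solution.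
   Context: Let $W$ be a standard real Brownian motion on a complete filtered probability space. Consider the one-dimensional lattice with nodes $j\in\mathbb Z$, coordinates $x_j=j\Delta x$, and neighbour sets $N(j)=\{j-1,j+1\}$. A linear discretization of the stochastic linear Schrödinger equation $\mathbf i\,du=-\frac12\Delta u\,dt+\sigma u\circ dW_t$ is the system (L1) $\mathbf i\,du_j=-\frac12\sum_{l\in N(j)}C_{lj}u_l\,dt+\sigma u_j\circ dW_t$, $j\in\mathbb Z$. A linear discretization of the white-noise-dispersion equation $\mathbf i\,du=-\frac12\Delta u\circ dW_t$ is the system (L2) $\mathbf i\,du_j=-\frac12\sum_{l\in N(j)}C_{lj}u_l\circ dW_t$, $j\in\mathbb Z$. Both stochastic differentials are in the Stratonovich sense. *)

theory Defs
  imports "HOL-Probability.Probability"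
begin

definition std_brownian :: "'a measure \<Rightarrow> (real \<Rightarrow> 'a \<Rightarrow> real) \<Rightarrow> bool" where
  "std_brownian M W \<longleftrightarrow>
     prob_space M \<and>
     (\<forall>t. W t \<in> borel_measurable M) \<and>
     (\<forall>\<omega>\<in>space M. W 0 \<omega> = 0 \<and> continuous_on {0..} (\<lambda>t. W t \<omega>)) \<and>
     (\<forall>s t. 0 \<le> s \<and> s < t \<longrightarrow>
        distributed M lborel (\<lambda>\<omega>. W t \<omega> - W s \<omega>)
          (\<lambda>x. ennreal (normal_density 0 (sqrt (t - s)) x))) \<and>
     (\<forall>(n::nat) (\<tau>::nat \<Rightarrow> real). 0 \<le> \<tau> 0 \<and> (\<forall>k<n. \<tau> k < \<tau> (Suc k)) \<longrightarrow>
        prob_space.indep_vars M (\<lambda>_. borel) (\<lambda>k \<omega>. W (\<tau> (Suc k)) \<omega> - W (\<tau> k) \<omega>) {..<n})"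

definition strat_integral_is ::
  "'a measure \<Rightarrow> (real \<Rightarrow> 'a \<Rightarrow> real) \<Rightarrow> (real \<Rightarrow> 'a \<Rightarrow> complex) \<Rightarrow> real \<Rightarrow> ('a \<Rightarrow> complex) \<Rightarrow> bool"
where
  "strat_integral_is M W Y t I \<longleftrightarrow>
     I \<in> borel_measurable M \<and>
     (\<forall>\<epsilon>>0. \<forall>\<eta>>0. \<exists>\<delta>>0. \<forall>(n::nat) (\<tau>::nat \<Rightarrow> real).
        \<tau> 0 = 0 \<and> \<tau> n = t \<and> (\<forall>k<n. \<tau> k < \<tau> (Suc k) \<and> \<tau> (Suc k) - \<tau> k < \<delta>) \<longrightarrow>
        measure M {\<omega>\<in>space M.
           norm ((\<Sum>k<n. (Y (\<tau> k) \<omega> + Y (\<tau> (Suc k)) \<omega>) / 2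
                    * complex_of_real (W (\<tau> (Suc k)) \<omega> - W (\<tau> k) \<omega>)) - I \<omega>) > \<epsilon>} < \<eta>)"

definition nbr :: "int \<Rightarrow> int set" where
  "nbr j = {j - 1, j + 1}"

definition lattice_process :: "'a measure \<Rightarrow> (int \<Rightarrow> real \<Rightarrow> 'a \<Rightarrow> complex) \<Rightarrow> bool" where
  "lattice_process M u \<longleftrightarrow>
     (\<forall>j t. u j t \<in> borel_measurable M) \<and>
     (\<forall>j. \<forall>\<omega>\<in>space M. continuous_on {0..} (\<lambda>s. u j s \<omega>))"

definition solves_L1 ::
  "'a measure \<Rightarrow> (real \<Rightarrow> 'a \<Rightarrow> real) \<Rightarrow> (int \<Rightarrow> int \<Rightarrow> complex) \<Rightarrow> real
     \<Rightarrow> (int \<Rightarrow> real \<Rightarrow> 'a \<Rightarrow> complex) \<Rightarrow> bool" where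
  "solves_L1 M W C \<sigma> u \<longleftrightarrow> lattice_process M u \<and>
     (\<forall>j. \<forall>t\<ge>0. \<exists>I. strat_integral_is M W (u j) t I \<and>
        (AE \<omega> in M. \<i> * (u j t \<omega> - u j 0 \<omega>) =
            - (1/2) * integral {0..t} (\<lambda>s. \<Sum>l\<in>nbr j. C l j * u l s \<omega>)
            + complex_of_real \<sigma> * I \<omega>))"

definition solves_L2 ::
  "'a measure \<Rightarrow> (real \<Rightarrow> 'a \<Rightarrow> real) \<Rightarrow> (int \<Rightarrow> int \<Rightarrow> complex)
     \<Rightarrow> (int \<Rightarrow> real \<Rightarrow> 'a \<Rightarrow> complex) \<Rightarrow> bool" where
  "solves_L2 M W C u \<longleftrightarrow> lattice_process M u \<and>
     (\<forall>j. \<forall>t\<ge>0. \<exists>I. strat_integral_is M W (\<lambda>s \<omega>. \<Sum>l\<in>nbr j. C l j * u l s \<omega>) t I \<and>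
        (AE \<omega> in M. \<i> * (u j t \<omega> - u j 0 \<omega>) = - (1/2) * I \<omega>))"

end

theory Submission
  imports Defs "HOL-Complex_Analysis.Conformal_Mappings" "HOL-Real_Asymp.Real_Asymp"
begin

(* Evaluate (L1), resp. (L2), at the node j = 0 along the plane wave. The Stratonovich integral of
   E(s) = exp(i (a s + b W(s))) obeys the classical chain rule: telescoping exp(i theta) along a
   partition differs from the trapezoidal sums by O(|Delta theta|^3), and the expected cubic
   variation of W vanishes. Hence, almost surely,
     (K^2 + c(K)) * int_0^t E(s) ds = 0              for (L1),
     (K^2 + c(K)) * (exp(-i K^2 W(1) / 2) - 1) = 0   for (L2),
   where c(z) = C(-1,0) exp(-i z dx) + C(1,0) exp(i z dx). The integral is nonzero for small t,
   and the Gaussian law of W(1) rules out exp(-i K^2 W(1) / 2) = 1 a.s. unless K = 0. So K is a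
   real root of the entire function z^2 + c(z), and these roots satisfy
   K^2 <= |C(-1,0)| + |C(1,0)|, hence are finitely many. *)

section \<open>The trapezoidal rule for the exponential\<close>

lemma abs_sin_minus_mult_cos_le:
  fixes x :: real
  shows "\<bar>sin x - x * cos x\<bar> \<le> \<bar>x\<bar>^3"
proof -
  have deriv: "((\<lambda>y. sin y - y * cos y) has_real_derivative (y * sin y)) (at y)" for y
    by (auto intro!: derivative_eq_intros simp: algebra_simps)
  have bound: "\<bar>x * (z * sin z)\<bar> \<le> \<bar>x\<bar>^3" if z: "\<bar>z\<bar> \<le> \<bar>x\<bar>" for z
  proof -
    have "\<bar>z * sin z\<bar> \<le> \<bar>z\<bar> * \<bar>z\<bar>"
      unfolding abs_mult by (rule mult_left_mono[OF abs_sin_x_le_abs_x]) simp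
    also have "\<dots> \<le> \<bar>x\<bar> * \<bar>x\<bar>" using z by (intro mult_mono) auto
    finally have "\<bar>x\<bar> * \<bar>z * sin z\<bar> \<le> \<bar>x\<bar> * (\<bar>x\<bar> * \<bar>x\<bar>)"
      by (intro mult_left_mono) auto
    then show ?thesis by (simp add: abs_mult power3_eq_cube)
  qed
  consider "x = 0" | "0 < x" | "x < 0" by linarith
  then show ?thesis
  proof cases
    case 2
    then obtain z where "0 < z" "z < x" "sin x - x * cos x = x * (z * sin z)"
      using MVT2[of 0 x "\<lambda>y. sin y - y * cos y" "\<lambda>y. y * sin y"] deriv by auto
    then show ?thesis using bound[of z] by simp
  next
    case 3
    then obtain z where "x < z" "z < 0" "- (sin x - x * cos x) = - x * (z * sin z)"
      using MVT2[of x 0 "\<lambda>y. sin y - y * cos y" "\<lambda>y. y * sin y"] deriv by auto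
    then show ?thesis using bound[of z] by simp
  qed simp
qed

text \<open>The error of the trapezoidal rule for \<open>\<integral>\<^sub>x\<^sup>y \<i> e\<^sup>\<i>\<^sup>\<theta> d\<theta> = e\<^sup>\<i>\<^sup>y - e\<^sup>\<i>\<^sup>x\<close>.\<close>

definition trapezoid_error :: "real \<Rightarrow> real \<Rightarrow> complex" where
  "trapezoid_error x y = exp (\<i> * of_real y) - exp (\<i> * of_real x)
     - \<i> * of_real (y - x) * (exp (\<i> * of_real x) + exp (\<i> * of_real y)) / 2"

lemma norm_trapezoid_error_le: "norm (trapezoid_error x y) \<le> \<bar>y - x\<bar>^3"
proof -
  define h where "h = (y - x) / 2"
  define c where "c = (x + y) / 2"
  have "x = c + - h" and "y = c + h" unfolding h_def c_def by (simp_all add: field_simps)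
  then have ex: "exp (\<i> * of_real x) = cis c * cis (- h)" and ey: "exp (\<i> * of_real y) = cis c * cis h"
    unfolding cis_mult by (simp_all add: cis_conv_exp)
  have yx: "y - x = 2 * h" unfolding h_def by simp
  have "trapezoid_error x y = cis c * Complex 0 (2 * (sin h - h * cos h))"
    unfolding trapezoid_error_def ex ey yx
    by (simp add: complex_eq_iff algebra_simps cis.sel)
  then have "norm (trapezoid_error x y) = 2 * \<bar>sin h - h * cos h\<bar>"
    by (simp add: norm_mult complex_norm) (metis abs_mult abs_numeral right_diff_distrib)
  also have "\<dots> \<le> 2 * \<bar>h\<bar>^3" using abs_sin_minus_mult_cos_le[of h] by simp
  also have "\<dots> \<le> \<bar>y - x\<bar>^3" unfolding yx by (simp add: abs_mult power_mult_distrib)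
  finally show ?thesis .
qed

lemma exp_telescope_trapezoid:
  fixes \<theta> :: "nat \<Rightarrow> real"
  shows "exp (\<i> * of_real (\<theta> n)) - exp (\<i> * of_real (\<theta> 0))
       = (\<Sum>k<n. \<i> * of_real (\<theta> (Suc k) - \<theta> k)
                   * (exp (\<i> * of_real (\<theta> k)) + exp (\<i> * of_real (\<theta> (Suc k)))) / 2)
         + (\<Sum>k<n. trapezoid_error (\<theta> k) (\<theta> (Suc k)))"
proof -
  have "(\<Sum>k<n. exp (\<i> * of_real (\<theta> (Suc k))) - exp (\<i> * of_real (\<theta> k)))
      = exp (\<i> * of_real (\<theta> n)) - exp (\<i> * of_real (\<theta> 0))"
    by (rule sum_lessThan_telescope)
  then show ?thesis unfolding trapezoid_error_def sum_subtractf by simp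
qed

section \<open>Convergence in measure\<close>

definition tendsto_in_measure :: "'a measure \<Rightarrow> (nat \<Rightarrow> 'a \<Rightarrow> 'b::real_normed_vector) \<Rightarrow> ('a \<Rightarrow> 'b) \<Rightarrow> bool"
  where "tendsto_in_measure M f g \<longleftrightarrow>
    (\<forall>e>0. (\<lambda>m. measure M {\<omega>\<in>space M. e < norm (f m \<omega> - g \<omega>)}) \<longlonglongrightarrow> 0)"

lemma tendsto_in_measure_cong:
  assumes "tendsto_in_measure M f g"
    and "\<And>m \<omega>. \<omega> \<in> space M \<Longrightarrow> f m \<omega> = f' m \<omega>" "\<And>\<omega>. \<omega> \<in> space M \<Longrightarrow> g \<omega> = g' \<omega>"
  shows "tendsto_in_measure M f' g'"
proof -
  have "{\<omega>\<in>space M. e < norm (f m \<omega> - g \<omega>)} = {\<omega>\<in>space M. e < norm (f' m \<omega> - g' \<omega>)}" for e m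
    using assms(2,3) by auto
  then show ?thesis using assms(1) unfolding tendsto_in_measure_def by simp
qed

lemma tendsto_in_measure_add:
  fixes f f' :: "nat \<Rightarrow> 'a \<Rightarrow> 'b::{real_normed_vector, second_countable_topology}"
  assumes "finite_measure M"
    and [measurable]: "\<And>m. f m \<in> borel_measurable M" "\<And>m. f' m \<in> borel_measurable M"
      "g \<in> borel_measurable M" "g' \<in> borel_measurable M"
    and "tendsto_in_measure M f g" "tendsto_in_measure M f' g'"
  shows "tendsto_in_measure M (\<lambda>m \<omega>. f m \<omega> + f' m \<omega>) (\<lambda>\<omega>. g \<omega> + g' \<omega>)"
  unfolding tendsto_in_measure_def
proof (intro allI impI)
  fix e :: real assume "0 < e"
  define A where "A m = {\<omega>\<in>space M. e/2 < norm (f m \<omega> - g \<omega>)}" for m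
  define A' where "A' m = {\<omega>\<in>space M. e/2 < norm (f' m \<omega> - g' \<omega>)}" for m
  define B where "B m = {\<omega>\<in>space M. e < norm (f m \<omega> + f' m \<omega> - (g \<omega> + g' \<omega>))}" for m
  have [measurable]: "A m \<in> sets M" "A' m \<in> sets M" "B m \<in> sets M" for m
    unfolding A_def A'_def B_def by measurable
  have bound: "measure M (B m) \<le> measure M (A m) + measure M (A' m)" for m
  proof -
    have "B m \<subseteq> A m \<union> A' m"
    proof
      fix \<omega> assume "\<omega> \<in> B m"
      then have "\<omega> \<in> space M" and "e < norm (f m \<omega> + f' m \<omega> - (g \<omega> + g' \<omega>))"
        unfolding B_def by auto
      moreover have "norm (f m \<omega> + f' m \<omega> - (g \<omega> + g' \<omega>))
          \<le> norm (f m \<omega> - g \<omega>) + norm (f' m \<omega> - g' \<omega>)"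
        by (metis add_diff_add norm_triangle_ineq)
      ultimately have "e/2 < norm (f m \<omega> - g \<omega>) \<or> e/2 < norm (f' m \<omega> - g' \<omega>)"
        by linarith
      with \<open>\<omega> \<in> space M\<close> show "\<omega> \<in> A m \<union> A' m" unfolding A_def A'_def by blast
    qed
    then have "measure M (B m) \<le> measure M (A m \<union> A' m)"
      by (intro finite_measure.finite_measure_mono[OF assms(1)]) auto
    also have "\<dots> \<le> measure M (A m) + measure M (A' m)"
      by (intro measure_Un_le) auto
    finally show ?thesis .
  qed
  have limA: "(\<lambda>m. measure M (A m)) \<longlonglongrightarrow> 0"
    unfolding A_def using half_gt_zero[OF \<open>0 < e\<close>]
    by (rule assms(6)[unfolded tendsto_in_measure_def, rule_format])
  have limA': "(\<lambda>m. measure M (A' m)) \<longlonglongrightarrow> 0"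
    unfolding A'_def using half_gt_zero[OF \<open>0 < e\<close>]
    by (rule assms(7)[unfolded tendsto_in_measure_def, rule_format])
  show "(\<lambda>m. measure M (B m)) \<longlonglongrightarrow> 0"
  proof (rule tendsto_sandwich[where f="\<lambda>_. 0" and h="\<lambda>m. measure M (A m) + measure M (A' m)"])
    show "\<forall>\<^sub>F m in sequentially. measure M (B m) \<le> measure M (A m) + measure M (A' m)"
      using bound by simp
    show "(\<lambda>m. measure M (A m) + measure M (A' m)) \<longlonglongrightarrow> 0"
      using tendsto_add[OF limA limA'] by simp
  qed simp_all
qed

lemma tendsto_in_measure_mult_left:
  fixes f :: "nat \<Rightarrow> 'a \<Rightarrow> 'b::real_normed_div_algebra"
  assumes "tendsto_in_measure M f g"
  shows "tendsto_in_measure M (\<lambda>m \<omega>. c * f m \<omega>) (\<lambda>\<omega>. c * g \<omega>)"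
proof (cases "c = 0")
  case True
  then show ?thesis by (simp add: tendsto_in_measure_def)
next
  case False
  have "{\<omega>\<in>space M. e < norm (c * f m \<omega> - c * g \<omega>)} = {\<omega>\<in>space M. e / norm c < norm (f m \<omega> - g \<omega>)}"
    for e m
  proof -
    have "norm (c * f m \<omega> - c * g \<omega>) = norm c * norm (f m \<omega> - g \<omega>)" for \<omega>
      by (metis norm_mult right_diff_distrib)
    then show ?thesis using False by (simp add: pos_divide_less_eq mult.commute)
  qed
  moreover have "e / norm c > 0" if "e > 0" for e using that False by simp
  ultimately show ?thesis using assms unfolding tendsto_in_measure_def by simp
qed

lemma tendsto_in_measure_const_imp_AE_eq:
  fixes g h :: "'a \<Rightarrow> 'b::{real_normed_vector, second_countable_topology}"
  assumes "finite_measure M" and [measurable]: "g \<in> borel_measurable M" "h \<in> borel_measurable M"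
    and "tendsto_in_measure M (\<lambda>m. g) h"
  shows "AE \<omega> in M. g \<omega> = h \<omega>"
proof -
  have "AE \<omega> in M. norm (g \<omega> - h \<omega>) \<le> 1 / real (Suc n)" for n
  proof (rule AE_I')
    let ?S = "{\<omega>\<in>space M. 1 / real (Suc n) < norm (g \<omega> - h \<omega>)}"
    have "?S \<in> sets M" by measurable
    moreover have "(\<lambda>m::nat. measure M ?S) \<longlonglongrightarrow> 0"
      by (rule assms(4)[unfolded tendsto_in_measure_def, rule_format]) simp
    then have "measure M ?S = 0" by (simp add: LIMSEQ_const_iff)
    ultimately show "?S \<in> null_sets M"
      using finite_measure.emeasure_eq_measure[OF assms(1)] by (simp add: null_sets_def)
  qed auto
  then have "AE \<omega> in M. \<forall>n. norm (g \<omega> - h \<omega>) \<le> 1 / real (Suc n)"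
    by (simp add: AE_all_countable)
  then show ?thesis
  proof (rule AE_mp, intro AE_I2 impI)
    fix \<omega> assume "\<forall>n. norm (g \<omega> - h \<omega>) \<le> 1 / real (Suc n)"
    then show "g \<omega> = h \<omega>"
      by (metis nat_approx_posE not_le zero_less_norm_iff right_minus_eq)
  qed
qed

lemma tendsto_in_measure_zero_if_integral_bound:
  fixes R :: "nat \<Rightarrow> 'a \<Rightarrow> 'b::{real_normed_vector, second_countable_topology}"
  assumes "finite_measure M" and [measurable]: "\<And>m. R m \<in> borel_measurable M"
    and B: "\<And>m. integrable M (B m)" and RB: "\<And>m \<omega>. \<omega> \<in> space M \<Longrightarrow> norm (R m \<omega>) \<le> B m \<omega>"
    and lim: "(\<lambda>m. integral\<^sup>L M (B m)) \<longlonglongrightarrow> 0"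
  shows "tendsto_in_measure M R (\<lambda>_. 0)"
  unfolding tendsto_in_measure_def
proof (intro allI impI)
  fix e :: real assume e: "0 < e"
  have [measurable]: "B m \<in> borel_measurable M" for m using B by auto
  have "measure M {\<omega>\<in>space M. e < norm (R m \<omega> - 0)} \<le> integral\<^sup>L M (B m) / e" for m
  proof -
    have "measure M {\<omega>\<in>space M. e < norm (R m \<omega> - 0)} \<le> measure M {\<omega>\<in>space M. e \<le> B m \<omega>}"
      using RB by (intro finite_measure.finite_measure_mono[OF assms(1)])
        (auto intro: less_imp_le less_le_trans)
    also have "\<dots> \<le> integral\<^sup>L M (B m) / e"
      using B RB e
      by (intro integral_Markov_inequality_measure) (auto intro!: AE_I2 order_trans[OF norm_ge_zero])
    finally show ?thesis .
  qed
  moreover have "(\<lambda>m. integral\<^sup>L M (B m) / e) \<longlonglongrightarrow> 0"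
    using tendsto_divide[OF lim tendsto_const, of e] e by simp
  ultimately show "(\<lambda>m. measure M {\<omega>\<in>space M. e < norm (R m \<omega> - 0)}) \<longlonglongrightarrow> 0"
    by - (rule tendsto_sandwich[where f="\<lambda>_. 0" and h="\<lambda>m. integral\<^sup>L M (B m) / e"], simp_all)
qed

lemma tendsto_in_measure_if_pointwise:
  fixes f :: "nat \<Rightarrow> 'a \<Rightarrow> 'b::{real_normed_vector, second_countable_topology}"
  assumes "finite_measure M"
    and [measurable]: "\<And>m. f m \<in> borel_measurable M" "g \<in> borel_measurable M"
    and lim: "\<And>\<omega>. \<omega> \<in> space M \<Longrightarrow> (\<lambda>m. f m \<omega>) \<longlonglongrightarrow> g \<omega>"
  shows "tendsto_in_measure M f g"
  unfolding tendsto_in_measure_def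
proof (intro allI impI)
  fix e :: real assume e: "0 < e"
  let ?A = "\<lambda>m. {\<omega>\<in>space M. e < norm (f m \<omega> - g \<omega>)}"
  have "(\<lambda>m. integral\<^sup>L M (indicator (?A m) :: 'a \<Rightarrow> real)) \<longlonglongrightarrow> integral\<^sup>L M (\<lambda>_. 0::real)"
  proof (rule integral_dominated_convergence[where w="\<lambda>_. 1"])
    show "integrable M (\<lambda>_. 1::real)"
      using assms(1) by (simp add: finite_measure.integrable_const)
    show "AE \<omega> in M. (\<lambda>m. indicator (?A m) \<omega> :: real) \<longlonglongrightarrow> 0"
    proof (rule AE_I2)
      fix \<omega> assume "\<omega> \<in> space M"
      then have "\<forall>\<^sub>F m in sequentially. norm (f m \<omega> - g \<omega>) < e"
        using lim e by (auto simp: tendsto_iff dist_norm)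
      then have "\<forall>\<^sub>F m in sequentially. (indicator (?A m) \<omega> :: real) = 0"
        by eventually_elim (auto simp: indicator_def)
      then show "(\<lambda>m. indicator (?A m) \<omega> :: real) \<longlonglongrightarrow> 0"
        by (rule tendsto_eventually)
    qed
  qed (auto simp: indicator_def)
  then show "(\<lambda>m. measure M (?A m)) \<longlonglongrightarrow> 0"
    by (simp add: Int_absorb2)
qed

section \<open>Trapezoidal sums on uniform grids\<close>

definition uniform_grid :: "real \<Rightarrow> nat \<Rightarrow> nat \<Rightarrow> real" where
  "uniform_grid t m k = real k * t / real (Suc m)"

lemma uniform_grid_0 [simp]: "uniform_grid t m 0 = 0"
  by (simp add: uniform_grid_def)

lemma uniform_grid_last [simp]: "uniform_grid t m (Suc m) = t"
  by (simp add: uniform_grid_def del: of_nat_Suc)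

lemma uniform_grid_step: "uniform_grid t m (Suc k) - uniform_grid t m k = t / real (Suc m)"
  by (simp add: uniform_grid_def diff_divide_distrib[symmetric] algebra_simps)

lemma uniform_grid_mono: "0 \<le> t \<Longrightarrow> k \<le> l \<Longrightarrow> uniform_grid t m k \<le> uniform_grid t m l"
  and uniform_grid_less: "0 < t \<Longrightarrow> uniform_grid t m k < uniform_grid t m (Suc k)"
  unfolding uniform_grid_def by (simp_all add: divide_right_mono divide_strict_right_mono mult_right_mono)

lemma uniform_grid_nonneg: "0 \<le> t \<Longrightarrow> 0 \<le> uniform_grid t m k"
  and uniform_grid_le: "0 \<le> t \<Longrightarrow> k \<le> Suc m \<Longrightarrow> uniform_grid t m k \<le> t"
  using uniform_grid_mono[of t 0 k m] uniform_grid_mono[of t k "Suc m" m] by simp_all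

lemma integral_split_uniform_grid:
  fixes \<phi> :: "real \<Rightarrow> 'b::banach"
  assumes "0 \<le> t" "continuous_on {0..t} \<phi>"
  shows "n \<le> Suc m \<Longrightarrow> integral {0..uniform_grid t m n} \<phi>
           = (\<Sum>k<n. integral {uniform_grid t m k..uniform_grid t m (Suc k)} \<phi>)"
proof (induction n)
  case (Suc n)
  have "\<phi> integrable_on {0..uniform_grid t m (Suc n)}"
    using assms Suc.prems uniform_grid_le
    by (intro integrable_on_subinterval[OF integrable_continuous_interval[OF assms(2)]]) auto
  then have "integral {0..uniform_grid t m (Suc n)} \<phi>
      = integral {0..uniform_grid t m n} \<phi> + integral {uniform_grid t m n..uniform_grid t m (Suc n)} \<phi>"
    using assms(1) uniform_grid_nonneg uniform_grid_mono[of t n "Suc n" m]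
    by (intro Henstock_Kurzweil_Integration.integral_combine[symmetric]) auto
  with Suc show ?case by simp
qed simp

lemma norm_integral_minus_trapezoid_le:
  fixes \<phi> :: "real \<Rightarrow> complex"
  assumes "a \<le> b" "continuous_on {a..b} \<phi>"
    and close: "\<And>s. s \<in> {a..b} \<Longrightarrow> norm (\<phi> s - \<phi> a) \<le> \<epsilon> \<and> norm (\<phi> s - \<phi> b) \<le> \<epsilon>"
  shows "norm (integral {a..b} \<phi> - (\<phi> a + \<phi> b) / 2 * of_real (b - a)) \<le> \<epsilon> * (b - a)"
proof -
  let ?c = "(\<phi> a + \<phi> b) / 2"
  have "((\<lambda>s. \<phi> s - ?c) has_integral (integral {a..b} \<phi> - (b - a) *\<^sub>R ?c)) (cbox a b)"
    using has_integral_diff[OF integrable_integral[OF integrable_continuous_interval[OF assms(2)]]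
        has_integral_const_real[of ?c a b]] assms(1) by simp
  moreover have "norm (\<phi> s - ?c) \<le> \<epsilon>" if "s \<in> cbox a b" for s
  proof -
    have "\<phi> s - ?c = ((\<phi> s - \<phi> a) + (\<phi> s - \<phi> b)) / 2" by (simp add: field_simps)
    then have "norm (\<phi> s - ?c) \<le> (norm (\<phi> s - \<phi> a) + norm (\<phi> s - \<phi> b)) / 2"
      by (metis norm_divide norm_triangle_ineq norm_numeral divide_right_mono zero_le_numeral)
    with close[of s] that show ?thesis by simp
  qed
  moreover have "0 \<le> \<epsilon>" using close[of a] assms(1) by auto
  ultimately have "norm (integral {a..b} \<phi> - (b - a) *\<^sub>R ?c) \<le> \<epsilon> * Henstock_Kurzweil_Integration.content (cbox a b)"
    by (intro has_integral_bound) auto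
  then show ?thesis using assms(1) by (simp add: scaleR_conv_of_real mult.commute)
qed

definition trapezoid_sum :: "(real \<Rightarrow> complex) \<Rightarrow> (real \<Rightarrow> real) \<Rightarrow> real \<Rightarrow> nat \<Rightarrow> complex" where
  "trapezoid_sum f g t m = (\<Sum>k<Suc m. (f (uniform_grid t m k) + f (uniform_grid t m (Suc k))) / 2
     * of_real (g (uniform_grid t m (Suc k)) - g (uniform_grid t m k)))"

lemma trapezoid_sum_mult_left: "trapezoid_sum (\<lambda>s. c * f s) g t m = c * trapezoid_sum f g t m"
  unfolding trapezoid_sum_def sum_distrib_left by (rule sum.cong) (simp_all add: algebra_simps)

lemma trapezoid_sums_tendsto_integral:
  fixes \<phi> :: "real \<Rightarrow> complex"
  assumes t: "0 < t" and cont: "continuous_on {0..t} \<phi>"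
  shows "(\<lambda>m. trapezoid_sum \<phi> (\<lambda>s. s) t m) \<longlonglongrightarrow> integral {0..t} \<phi>"
proof (rule LIMSEQ_I)
  fix r :: real assume "0 < r"
  define \<epsilon> where "\<epsilon> = r / (2 * t)"
  have "0 < \<epsilon>" using \<open>0 < r\<close> t by (simp add: \<epsilon>_def)
  obtain d where "0 < d"
    and d: "\<And>x y. x \<in> {0..t} \<Longrightarrow> y \<in> {0..t} \<Longrightarrow> dist y x < d \<Longrightarrow> dist (\<phi> y) (\<phi> x) < \<epsilon>"
    using compact_uniformly_continuous[OF cont compact_Icc] \<open>0 < \<epsilon>\<close>
    unfolding uniformly_continuous_on_def by metis
  obtain M0 :: nat where "t / d < real M0" using reals_Archimedean2 by blast
  show "\<exists>M0. \<forall>m\<ge>M0. norm (trapezoid_sum \<phi> (\<lambda>s. s) t m - integral {0..t} \<phi>) < r"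
  proof (intro exI allI impI)
    fix m assume "M0 \<le> m"
    define h where "h = t / real (Suc m)"
    let ?\<tau> = "uniform_grid t m"
    have "t / d < real (Suc m)" using \<open>t / d < real M0\<close> \<open>M0 \<le> m\<close> by linarith
    then have "h < d" using \<open>0 < d\<close> by (simp add: h_def field_simps)
    have piece: "norm (integral {?\<tau> k..?\<tau> (Suc k)} \<phi> - (\<phi> (?\<tau> k) + \<phi> (?\<tau> (Suc k))) / 2 * of_real h)
                 \<le> \<epsilon> * h" if "k < Suc m" for k
    proof -
      have sub: "{?\<tau> k..?\<tau> (Suc k)} \<subseteq> {0..t}"
        using t that uniform_grid_nonneg[of t m k] uniform_grid_le[of t "Suc k" m] by auto
      have "norm (\<phi> s - \<phi> (?\<tau> k)) \<le> \<epsilon> \<and> norm (\<phi> s - \<phi> (?\<tau> (Suc k))) \<le> \<epsilon>"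
        if s: "s \<in> {?\<tau> k..?\<tau> (Suc k)}" for s
      proof -
        have "s \<in> {0..t}" "?\<tau> k \<in> {0..t}" "?\<tau> (Suc k) \<in> {0..t}" using s sub by auto
        moreover have "dist s (?\<tau> k) < d" "dist s (?\<tau> (Suc k)) < d"
          using s uniform_grid_step[of t m k] \<open>h < d\<close> by (auto simp: h_def dist_real_def)
        ultimately show ?thesis
          using d[of "?\<tau> k" s] d[of "?\<tau> (Suc k)" s] by (auto simp: dist_norm)
      qed
      then show ?thesis
        using norm_integral_minus_trapezoid_le[of "?\<tau> k" "?\<tau> (Suc k)" \<phi> \<epsilon>]
          continuous_on_subset[OF cont sub] uniform_grid_less[OF t, of m k]
        by (simp add: uniform_grid_step h_def)
    qed
    have "norm (trapezoid_sum \<phi> (\<lambda>s. s) t m - integral {0..t} \<phi>)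
        = norm (\<Sum>k<Suc m. integral {?\<tau> k..?\<tau> (Suc k)} \<phi> - (\<phi> (?\<tau> k) + \<phi> (?\<tau> (Suc k))) / 2 * of_real h)"
      using integral_split_uniform_grid[OF less_imp_le[OF t] cont, of "Suc m" m]
      by (simp add: trapezoid_sum_def uniform_grid_step h_def sum_subtractf norm_minus_commute)
    also have "\<dots> \<le> (\<Sum>k<Suc m. \<epsilon> * h)"
      by (intro order_trans[OF norm_sum] sum_mono piece) simp
    also have "\<dots> = \<epsilon> * t" by (simp add: h_def)
    also have "\<dots> < r" using \<open>0 < r\<close> t by (simp add: \<epsilon>_def)
    finally show "norm (trapezoid_sum \<phi> (\<lambda>s. s) t m - integral {0..t} \<phi>) < r" .
  qed
qed

section \<open>Brownian motion\<close>

lemma std_brownianD: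
  assumes "std_brownian M W"
  shows "prob_space M" and "W t \<in> borel_measurable M" and "\<omega> \<in> space M \<Longrightarrow> W 0 \<omega> = 0"
    and "\<omega> \<in> space M \<Longrightarrow> continuous_on {0..t} (\<lambda>s. W s \<omega>)"
    and "0 \<le> s \<Longrightarrow> s < t \<Longrightarrow> distributed M lborel (\<lambda>\<omega>. W t \<omega> - W s \<omega>)
           (\<lambda>x. ennreal (normal_density 0 (sqrt (t - s)) x))"
  using assms continuous_on_subset[of "{0..}" "\<lambda>s. W s \<omega>" "{0..t}"]
  unfolding std_brownian_def by auto

lemma std_brownian_abs_increment_cube:
  assumes "std_brownian M W" and "0 \<le> s" "s < t"
  shows "integrable M (\<lambda>\<omega>. \<bar>W t \<omega> - W s \<omega>\<bar>^3)"
    and "(\<integral>\<omega>. \<bar>W t \<omega> - W s \<omega>\<bar>^3 \<partial>M) = 2 * sqrt (t - s)^3 * sqrt (2 / pi)"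
proof -
  note distr = std_brownianD(5)[OF assms]
  have "has_bochner_integral lborel (\<lambda>x. normal_density 0 (sqrt (t - s)) x * \<bar>x\<bar>^3)
      (2 * sqrt (t - s)^3 * sqrt (2 / pi))"
    using normal_moment_abs_odd[of "sqrt (t - s)" 0 1] assms(3) by (simp add: numeral_eq_Suc)
  then show "integrable M (\<lambda>\<omega>. \<bar>W t \<omega> - W s \<omega>\<bar>^3)"
    and "(\<integral>\<omega>. \<bar>W t \<omega> - W s \<omega>\<bar>^3 \<partial>M) = 2 * sqrt (t - s)^3 * sqrt (2 / pi)"
    using distributed_integrable[OF distr, of "\<lambda>x. \<bar>x\<bar>^3"] distributed_integral[OF distr, of "\<lambda>x. \<bar>x\<bar>^3"]
    by (auto simp: has_bochner_integral_iff)
qed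

definition cubic_variation :: "(real \<Rightarrow> 'a \<Rightarrow> real) \<Rightarrow> real \<Rightarrow> nat \<Rightarrow> 'a \<Rightarrow> real" where
  "cubic_variation W t m \<omega> = (\<Sum>k<Suc m. \<bar>W (uniform_grid t m (Suc k)) \<omega> - W (uniform_grid t m k) \<omega>\<bar>^3)"

lemma integrable_cubic_variation:
  assumes "std_brownian M W" "0 < t"
  shows "integrable M (cubic_variation W t m)"
  unfolding cubic_variation_def
  by (intro Bochner_Integration.integrable_sum std_brownian_abs_increment_cube(1)[OF assms(1)]
      uniform_grid_nonneg uniform_grid_less assms(2) less_imp_le)

lemma expected_cubic_variation_tendsto_0:
  assumes "std_brownian M W" "0 < t"
  shows "(\<lambda>m. \<integral>\<omega>. cubic_variation W t m \<omega> \<partial>M) \<longlonglongrightarrow> 0"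
proof -
  note increment = std_brownian_abs_increment_cube[OF assms(1) uniform_grid_nonneg uniform_grid_less[OF assms(2)]]
  have "(\<integral>\<omega>. cubic_variation W t m \<omega> \<partial>M)
      = (\<Sum>k<Suc m. \<integral>\<omega>. \<bar>W (uniform_grid t m (Suc k)) \<omega> - W (uniform_grid t m k) \<omega>\<bar>^3 \<partial>M)" for m
    unfolding cubic_variation_def using increment(1) assms(2) by (intro Bochner_Integration.integral_sum) auto
  also have "\<dots> m = 2 * sqrt (2 / pi) * (real (Suc m) * sqrt (t / real (Suc m))^3)" for m
    using increment(2) assms(2) by (simp add: uniform_grid_step del: sum.lessThan_Suc)
  finally have "(\<integral>\<omega>. cubic_variation W t m \<omega> \<partial>M) = 2 * sqrt (2 / pi) * (real (Suc m) * sqrt (t / real (Suc m))^3)"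
    for m .
  moreover have "(\<lambda>m. real (Suc m) * sqrt (t / real (Suc m))^3) \<longlonglongrightarrow> 0"
    using assms(2) by real_asymp
  ultimately show ?thesis
    using tendsto_mult_right_zero[of _ sequentially "2 * sqrt (2 / pi)"] by simp
qed

lemma std_brownian_not_AE_exp_eq_1:
  assumes "std_brownian M W" and "b \<noteq> 0"
  shows "\<not> (AE \<omega> in M. exp (\<i> * of_real (b * W 1 \<omega>)) = 1)"
proof
  assume AE_eq_1: "AE \<omega> in M. exp (\<i> * of_real (b * W 1 \<omega>)) = 1"
  interpret prob_space M using std_brownianD(1)[OF assms(1)] .
  have increment_measurable: "(\<lambda>\<omega>. W 1 \<omega> - W 0 \<omega>) \<in> measurable M lborel"
    using std_brownianD(2)[OF assms(1)] by measurable
  define Z where "Z = range (\<lambda>n::int. 2 * pi * real_of_int n / b)"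
  have "Z \<in> null_sets lborel" unfolding Z_def by (intro countable_imp_null_set_lborel) simp
  have Z: "x \<in> Z" if "exp (\<i> * of_real (b * x)) = 1" for x
  proof -
    from that obtain n :: int where "b * x = real_of_int (2 * n) * pi"
      unfolding exp_eq_1 by auto
    then have "x = 2 * pi * real_of_int n / b" using assms(2) by (simp add: field_simps)
    then show ?thesis unfolding Z_def by blast
  qed
  note distr = std_brownianD(5)[OF assms(1) order_refl zero_less_one]
  have "AE x in density lborel (\<lambda>x. ennreal (normal_density 0 (sqrt (1 - 0)) x)). x \<notin> Z"
    using AE_not_in[OF \<open>Z \<in> null_sets lborel\<close>] by (subst AE_density) (auto elim!: AE_mp)
  then have "AE x in distr M lborel (\<lambda>\<omega>. W 1 \<omega> - W 0 \<omega>). x \<notin> Z"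
    unfolding distributed_distr_eq_density[OF distr] .
  then have "AE \<omega> in M. W 1 \<omega> - W 0 \<omega> \<notin> Z"
    using \<open>Z \<in> null_sets lborel\<close> by (subst (asm) AE_distr_iff[OF increment_measurable]) auto
  with AE_eq_1 AE_space have "AE \<omega> in M. False"
    by eventually_elim (use Z std_brownianD(3)[OF assms(1)] in fastforce)
  then show False by simp
qed

section \<open>The Stratonovich chain rule for phases\<close>

lemma strat_integral_tendsto_in_measure:
  assumes "strat_integral_is M W Y t I" and t: "0 < t"
  shows "tendsto_in_measure M (\<lambda>m \<omega>. trapezoid_sum (\<lambda>s. Y s \<omega>) (\<lambda>s. W s \<omega>) t m) I"
  unfolding tendsto_in_measure_def
proof (intro allI impI LIMSEQ_I)
  fix e r :: real assume "0 < e" "0 < r"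
  then obtain \<delta> where "0 < \<delta>" and \<delta>: "\<forall>(n::nat) \<tau>.
      \<tau> 0 = 0 \<and> \<tau> n = t \<and> (\<forall>k<n. \<tau> k < \<tau> (Suc k) \<and> \<tau> (Suc k) - \<tau> k < \<delta>) \<longrightarrow>
      measure M {\<omega>\<in>space M. norm ((\<Sum>k<n. (Y (\<tau> k) \<omega> + Y (\<tau> (Suc k)) \<omega>) / 2
                    * of_real (W (\<tau> (Suc k)) \<omega> - W (\<tau> k) \<omega>)) - I \<omega>) > e} < r"
    using assms(1) unfolding strat_integral_is_def by blast
  obtain M0 :: nat where "t / \<delta> < real M0" using reals_Archimedean2 by blast
  show "\<exists>M0. \<forall>m\<ge>M0. norm (measure M {\<omega>\<in>space M.
      e < norm (trapezoid_sum (\<lambda>s. Y s \<omega>) (\<lambda>s. W s \<omega>) t m - I \<omega>)} - 0) < r"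
  proof (intro exI allI impI)
    fix m assume "M0 \<le> m"
    then have "t / \<delta> < real (Suc m)" using \<open>t / \<delta> < real M0\<close> by linarith
    then have "t / real (Suc m) < \<delta>" using \<open>0 < \<delta>\<close> by (simp add: field_simps)
    then show "norm (measure M {\<omega>\<in>space M.
        e < norm (trapezoid_sum (\<lambda>s. Y s \<omega>) (\<lambda>s. W s \<omega>) t m - I \<omega>)} - 0) < r"
      using \<delta>[rule_format, of "uniform_grid t m" "Suc m"] uniform_grid_less[OF t]
      by (simp add: trapezoid_sum_def uniform_grid_step)
  qed
qed

definition phase :: "real \<Rightarrow> real \<Rightarrow> (real \<Rightarrow> real) \<Rightarrow> real \<Rightarrow> complex" where
  "phase a b w s = exp (\<i> * of_real (a * s + b * w s))"

definition trapezoid_remainder :: "(real \<Rightarrow> real) \<Rightarrow> real \<Rightarrow> nat \<Rightarrow> complex" where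
  "trapezoid_remainder \<theta> t m =
     (\<Sum>k<Suc m. trapezoid_error (\<theta> (uniform_grid t m k)) (\<theta> (uniform_grid t m (Suc k))))"

lemma phase_trapezoid_expansion:
  "phase a b w t - phase a b w 0
     = \<i> * of_real a * trapezoid_sum (phase a b w) (\<lambda>s. s) t m
       + \<i> * of_real b * trapezoid_sum (phase a b w) w t m
       + trapezoid_remainder (\<lambda>s. a * s + b * w s) t m"
proof -
  define \<theta> where "\<theta> k = a * uniform_grid t m k + b * w (uniform_grid t m k)" for k
  have increment: "\<theta> (Suc k) - \<theta> k = a * (uniform_grid t m (Suc k) - uniform_grid t m k)
      + b * (w (uniform_grid t m (Suc k)) - w (uniform_grid t m k))" for k
    by (simp add: \<theta>_def algebra_simps)
  have split: "\<i> * of_real (a * p + b * q) * z / 2 = \<i> * of_real a * (z / 2 * of_real p) + \<i> * of_real b * (z / 2 * of_real q)"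
    for p q :: real and z :: complex
    by (simp add: algebra_simps)
  show ?thesis
    using exp_telescope_trapezoid[of \<theta> "Suc m"]
    unfolding increment split sum.distrib sum_distrib_left[symmetric]
    by (simp add: \<theta>_def phase_def trapezoid_sum_def trapezoid_remainder_def)
qed

lemma power3_add_le:
  fixes x y :: real
  assumes "0 \<le> x" "0 \<le> y"
  shows "(x + y)^3 \<le> 4 * (x^3 + y^3)"
proof -
  have "4 * (x^3 + y^3) - (x + y)^3 = 3 * ((x + y) * (x - y)^2)"
    by (simp add: power3_eq_cube power2_eq_square algebra_simps)
  moreover have "0 \<le> (x + y) * (x - y)^2" using assms by simp
  ultimately show ?thesis by linarith
qed

lemma norm_trapezoid_remainder_le:
  assumes "0 \<le> t"
  shows "norm (trapezoid_remainder (\<lambda>s. a * s + b * w s) t m)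
    \<le> 4 * real (Suc m) * (\<bar>a\<bar> * (t / real (Suc m)))^3
      + 4 * \<bar>b\<bar>^3 * (\<Sum>k<Suc m. \<bar>w (uniform_grid t m (Suc k)) - w (uniform_grid t m k)\<bar>^3)"
proof -
  define h where "h = t / real (Suc m)"
  have "0 \<le> h" using assms by (simp add: h_def)
  have "norm (trapezoid_error (a * uniform_grid t m k + b * w (uniform_grid t m k))
                (a * uniform_grid t m (Suc k) + b * w (uniform_grid t m (Suc k))))
      \<le> 4 * (\<bar>a\<bar> * h)^3 + 4 * \<bar>b\<bar>^3 * \<bar>w (uniform_grid t m (Suc k)) - w (uniform_grid t m k)\<bar>^3" for k
  proof -
    let ?d = "w (uniform_grid t m (Suc k)) - w (uniform_grid t m k)"
    have "a * uniform_grid t m (Suc k) + b * w (uniform_grid t m (Suc k))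
          - (a * uniform_grid t m k + b * w (uniform_grid t m k))
        = a * (uniform_grid t m (Suc k) - uniform_grid t m k) + b * ?d"
      by (simp add: algebra_simps)
    also have "\<dots> = a * h + b * ?d" by (simp only: uniform_grid_step h_def)
    finally have "norm (trapezoid_error (a * uniform_grid t m k + b * w (uniform_grid t m k))
                (a * uniform_grid t m (Suc k) + b * w (uniform_grid t m (Suc k)))) \<le> \<bar>a * h + b * ?d\<bar>^3"
      using norm_trapezoid_error_le by metis
    also have "\<dots> \<le> (\<bar>a\<bar> * h + \<bar>b\<bar> * \<bar>?d\<bar>)^3"
      using abs_triangle_ineq[of "a * h" "b * ?d"] \<open>0 \<le> h\<close> by (intro power_mono) (auto simp: abs_mult)
    also have "\<dots> \<le> 4 * ((\<bar>a\<bar> * h)^3 + (\<bar>b\<bar> * \<bar>?d\<bar>)^3)"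
      using \<open>0 \<le> h\<close> by (intro power3_add_le) auto
    finally show ?thesis by (simp add: power_mult_distrib algebra_simps)
  qed
  then have "norm (trapezoid_remainder (\<lambda>s. a * s + b * w s) t m)
      \<le> (\<Sum>k<Suc m. 4 * (\<bar>a\<bar> * h)^3 + 4 * \<bar>b\<bar>^3 * \<bar>w (uniform_grid t m (Suc k)) - w (uniform_grid t m k)\<bar>^3)"
    unfolding trapezoid_remainder_def by (intro order_trans[OF norm_sum] sum_mono)
  also have "\<dots> = 4 * real (Suc m) * (\<bar>a\<bar> * h)^3
      + 4 * \<bar>b\<bar>^3 * (\<Sum>k<Suc m. \<bar>w (uniform_grid t m (Suc k)) - w (uniform_grid t m k)\<bar>^3)"
    by (simp only: sum.distrib sum_distrib_left[symmetric] sum_constant card_lessThan)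
  finally show ?thesis by (simp only: h_def)
qed

lemma trapezoid_remainder_tendsto_in_measure:
  assumes "std_brownian M W" and t: "0 < t"
  shows "tendsto_in_measure M (\<lambda>m \<omega>. trapezoid_remainder (\<lambda>s. a * s + b * W s \<omega>) t m) (\<lambda>_. 0)"
proof -
  interpret prob_space M using std_brownianD(1)[OF assms(1)] .
  note [measurable] = std_brownianD(2)[OF assms(1)]
  define B where "B m \<omega> = 4 * real (Suc m) * (\<bar>a\<bar> * (t / real (Suc m)))^3
                            + 4 * \<bar>b\<bar>^3 * cubic_variation W t m \<omega>" for m \<omega>
  have B: "integrable M (B m)" for m
    unfolding B_def using integrable_cubic_variation[OF assms] by simp
  have "integral\<^sup>L M (B m) = 4 * \<bar>a\<bar>^3 * (real (Suc m) * (t / real (Suc m))^3)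
      + 4 * \<bar>b\<bar>^3 * (\<integral>\<omega>. cubic_variation W t m \<omega> \<partial>M)" for m
    unfolding B_def using integrable_cubic_variation[OF assms]
    by (simp add: prob_space power_mult_distrib power_divide algebra_simps)
  moreover have "(\<lambda>m. 4 * \<bar>a\<bar>^3 * (real (Suc m) * (t / real (Suc m))^3)) \<longlonglongrightarrow> 4 * \<bar>a\<bar>^3 * 0"
  proof -
    have "(\<lambda>m. real (Suc m) * (t / real (Suc m))^3) \<longlonglongrightarrow> 0"
      unfolding power_divide by real_asymp
    then show ?thesis by (intro tendsto_mult) simp_all
  qed
  moreover have "(\<lambda>m. 4 * \<bar>b\<bar>^3 * (\<integral>\<omega>. cubic_variation W t m \<omega> \<partial>M)) \<longlonglongrightarrow> 4 * \<bar>b\<bar>^3 * 0"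
    using expected_cubic_variation_tendsto_0[OF assms] by (intro tendsto_mult) simp_all
  ultimately have "(\<lambda>m. integral\<^sup>L M (B m)) \<longlonglongrightarrow> 0"
    using tendsto_add by fastforce
  moreover have "(\<lambda>\<omega>. trapezoid_remainder (\<lambda>s. a * s + b * W s \<omega>) t m) \<in> borel_measurable M" for m
    unfolding trapezoid_remainder_def trapezoid_error_def by measurable
  moreover have "norm (trapezoid_remainder (\<lambda>s. a * s + b * W s \<omega>) t m) \<le> B m \<omega>" for m \<omega>
    using norm_trapezoid_remainder_le[of t a b "\<lambda>s. W s \<omega>" m] t
    by (simp add: B_def cubic_variation_def mult.assoc)
  ultimately show ?thesis
    using B by (intro tendsto_in_measure_zero_if_integral_bound[OF finite_measure_axioms]) auto
qed

lemma continuous_on_phase: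
  assumes "std_brownian M W" "\<omega> \<in> space M"
  shows "continuous_on {0..t} (phase a b (\<lambda>r. W r \<omega>))"
  using std_brownianD(4)[OF assms] unfolding phase_def by (intro continuous_intros)

lemma phase_0:
  assumes "std_brownian M W" "\<omega> \<in> space M"
  shows "phase a b (\<lambda>r. W r \<omega>) 0 = 1"
  using std_brownianD(3)[OF assms] by (simp add: phase_def)

lemma stratonovich_chain_rule_phase:
  assumes "std_brownian M W" and t: "0 < t"
    and strat: "strat_integral_is M W (\<lambda>s \<omega>. c * phase a b (\<lambda>r. W r \<omega>) s) t I"
  shows "AE \<omega> in M. c * (phase a b (\<lambda>r. W r \<omega>) t - 1)
    = \<i> * of_real a * c * integral {0..t} (phase a b (\<lambda>r. W r \<omega>)) + \<i> * of_real b * I \<omega>"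
proof -
  interpret prob_space M using std_brownianD(1)[OF assms(1)] .
  note [measurable] = std_brownianD(2)[OF assms(1)]
  have [measurable]: "I \<in> borel_measurable M" using strat by (simp add: strat_integral_is_def)
  define E where "E \<omega> = phase a b (\<lambda>r. W r \<omega>)" for \<omega>
  define T where "T m = (\<lambda>\<omega>. trapezoid_sum (E \<omega>) (\<lambda>s. s) t m)" for m
  define S where "S m = (\<lambda>\<omega>. trapezoid_sum (E \<omega>) (\<lambda>s. W s \<omega>) t m)" for m
  define R where "R m = (\<lambda>\<omega>. trapezoid_remainder (\<lambda>s. a * s + b * W s \<omega>) t m)" for m
  define L where "L \<omega> = integral {0..t} (E \<omega>)" for \<omega>
  have [measurable]: "R m \<in> borel_measurable M" for m
    unfolding R_def trapezoid_remainder_def trapezoid_error_def by measurable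
  have [measurable]: "T m \<in> borel_measurable M" for m
    unfolding T_def E_def trapezoid_sum_def phase_def by measurable
  have [measurable]: "S m \<in> borel_measurable M" for m
    unfolding S_def E_def trapezoid_sum_def phase_def by measurable
  have T: "(\<lambda>m. T m \<omega>) \<longlonglongrightarrow> L \<omega>" if "\<omega> \<in> space M" for \<omega>
    unfolding T_def L_def E_def
    by (rule trapezoid_sums_tendsto_integral[OF t continuous_on_phase[OF assms(1) that]])
  have [measurable]: "L \<in> borel_measurable M"
    by (rule borel_measurable_LIMSEQ_metric[OF _ T]) simp
  have expansion: "c * (E \<omega> t - 1) = \<i> * of_real a * (c * T m \<omega>) + \<i> * of_real b * (c * S m \<omega>) + c * R m \<omega>"
    if "\<omega> \<in> space M" for m \<omega>
    using phase_trapezoid_expansion[of a b "\<lambda>r. W r \<omega>" t m] phase_0[OF assms(1) that]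
    by (simp add: E_def T_def S_def R_def algebra_simps)
  have lim_T: "tendsto_in_measure M (\<lambda>m \<omega>. \<i> * of_real a * (c * T m \<omega>)) (\<lambda>\<omega>. \<i> * of_real a * (c * L \<omega>))"
    using T by (intro tendsto_in_measure_mult_left tendsto_in_measure_if_pointwise finite_measure_axioms) auto
  have lim_S: "tendsto_in_measure M (\<lambda>m \<omega>. \<i> * of_real b * (c * S m \<omega>)) (\<lambda>\<omega>. \<i> * of_real b * I \<omega>)"
    using strat_integral_tendsto_in_measure[OF strat t]
    by (intro tendsto_in_measure_mult_left) (simp add: S_def E_def trapezoid_sum_mult_left)
  have lim_R: "tendsto_in_measure M (\<lambda>m \<omega>. c * R m \<omega>) (\<lambda>\<omega>. c * 0)"
    using trapezoid_remainder_tendsto_in_measure[OF assms(1) t]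
    by (intro tendsto_in_measure_mult_left) (simp add: R_def)
  have "tendsto_in_measure M
      (\<lambda>m \<omega>. \<i> * of_real a * (c * T m \<omega>) + \<i> * of_real b * (c * S m \<omega>) + c * R m \<omega>)
      (\<lambda>\<omega>. \<i> * of_real a * (c * L \<omega>) + \<i> * of_real b * I \<omega> + c * 0)"
    by (intro tendsto_in_measure_add[OF finite_measure_axioms _ _ _ _
          tendsto_in_measure_add[OF finite_measure_axioms _ _ _ _ lim_T lim_S] lim_R]) measurable
  then have "tendsto_in_measure M (\<lambda>m \<omega>. c * (E \<omega> t - 1))
      (\<lambda>\<omega>. \<i> * of_real a * (c * L \<omega>) + \<i> * of_real b * I \<omega> + c * 0)"
    by (rule tendsto_in_measure_cong) (use expansion in force)+
  then have "AE \<omega> in M. c * (E \<omega> t - 1) = \<i> * of_real a * (c * L \<omega>) + \<i> * of_real b * I \<omega> + c * 0"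
    by (intro tendsto_in_measure_const_imp_AE_eq finite_measure_axioms) (simp_all add: E_def phase_def)
  then show ?thesis by (simp add: E_def L_def algebra_simps)
qed

section \<open>Plane waves and the dispersion relation\<close>

lemma integral_nonzero_near_0:
  fixes \<phi> :: "real \<Rightarrow> complex"
  assumes cont: "continuous_on {0..1} \<phi>" and "\<phi> 0 = 1"
  shows "\<exists>n. integral {0..1 / real (Suc n)} \<phi> \<noteq> 0"
proof -
  have "\<forall>e>0. \<exists>d>0. \<forall>x\<in>{0..1}. dist x 0 < d \<longrightarrow> dist (\<phi> x) (\<phi> 0) < e"
    by (rule bspec[OF cont[unfolded continuous_on_iff]]) simp
  then obtain d where "0 < d" and d: "\<forall>x\<in>{0..1}. dist x 0 < d \<longrightarrow> dist (\<phi> x) (\<phi> 0) < 1/2"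
    by (meson half_gt_zero zero_less_one)
  obtain n where "1 / real (Suc n) < d" using \<open>0 < d\<close> nat_approx_posE by blast
  define s where "s = 1 / real (Suc n)"
  have "0 < s" "s \<le> 1" "s < d" using \<open>1 / real (Suc n) < d\<close> by (simp_all add: s_def)
  have "\<phi> integrable_on {0..s}"
    using integrable_on_subinterval[OF integrable_continuous_interval[OF cont], of 0 s] \<open>s \<le> 1\<close> by simp
  then have "((\<lambda>x. \<phi> x - 1) has_integral (integral {0..s} \<phi> - s *\<^sub>R 1)) {0..s}"
    using has_integral_const_real[of "1::complex" 0 s] \<open>0 < s\<close>
    by (intro has_integral_diff integrable_integral) auto
  then have "((\<lambda>x. \<phi> x - 1) has_integral (integral {0..s} \<phi> - of_real s)) (cbox 0 s)"
    by (simp add: scaleR_conv_of_real)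
  moreover have "norm (\<phi> x - 1) \<le> 1/2" if "x \<in> cbox 0 s" for x
  proof -
    have "x \<in> {0..1}" "dist x 0 < d" using that \<open>s \<le> 1\<close> \<open>s < d\<close> by (auto simp: dist_real_def)
    then show ?thesis using d \<open>\<phi> 0 = 1\<close> by (auto simp: dist_norm)
  qed
  ultimately have "norm (integral {0..s} \<phi> - of_real s) \<le> 1/2 * Henstock_Kurzweil_Integration.content (cbox 0 s)"
    by (intro has_integral_bound) auto
  then have "integral {0..s} \<phi> \<noteq> 0" using \<open>0 < s\<close> by auto
  then show ?thesis unfolding s_def by blast
qed

definition neighbour_symbol :: "(int \<Rightarrow> int \<Rightarrow> complex) \<Rightarrow> real \<Rightarrow> complex \<Rightarrow> complex" where
  "neighbour_symbol C dx z = C (-1) 0 * exp (- (\<i> * z * of_real dx)) + C 1 0 * exp (\<i> * z * of_real dx)"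

definition dispersion :: "(int \<Rightarrow> int \<Rightarrow> complex) \<Rightarrow> real \<Rightarrow> complex \<Rightarrow> complex" where
  "dispersion C dx z = z^2 + neighbour_symbol C dx z"

lemma sum_nbr0_plane_wave:
  "(\<Sum>l\<in>nbr 0. C l 0 * (z * exp (\<i> * of_real (K * (of_int l * dx))) * w))
     = z * neighbour_symbol C dx (of_real K) * w"
proof -
  have "exp (\<i> * of_real (K * (of_int (-1) * dx))) = exp (- (\<i> * of_real K * of_real dx))"
    and "exp (\<i> * of_real (K * (of_int 1 * dx))) = exp (\<i> * of_real K * of_real dx)"
    by (simp_all add: mult.assoc)
  then show ?thesis
    by (simp add: nbr_def neighbour_symbol_def algebra_simps)
qed

lemma norm_neighbour_symbol_le: "norm (neighbour_symbol C dx (of_real K)) \<le> norm (C (-1) 0) + norm (C 1 0)"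
proof -
  have "norm (neighbour_symbol C dx (of_real K))
      \<le> norm (C (-1) 0 * exp (\<i> * of_real (- (K * dx)))) + norm (C 1 0 * exp (\<i> * of_real (K * dx)))"
    unfolding neighbour_symbol_def by (simp add: mult.assoc norm_triangle_ineq)
  also have "\<dots> = norm (C (-1) 0) + norm (C 1 0)"
    by (simp only: norm_mult norm_exp_i_times mult_1_right)
  finally show ?thesis .
qed

lemma real_root_dispersion_bound:
  assumes "dispersion C dx (of_real K) = 0"
  shows "K^2 \<le> norm (C (-1) 0) + norm (C 1 0)"
proof -
  have "of_real (K^2) = - neighbour_symbol C dx (of_real K)"
    using assms by (simp add: dispersion_def eq_neg_iff_add_eq_0)
  then have "norm (of_real (K^2) :: complex) = norm (neighbour_symbol C dx (of_real K))"
    by simp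
  then show ?thesis using norm_neighbour_symbol_le[of C dx K] by (simp add: norm_power)
qed

lemma finite_real_roots_dispersion: "finite {K::real. dispersion C dx (of_real K) = 0}"
proof (cases "\<exists>K::real. dispersion C dx (of_real K) = 0")
  case True
  then obtain K0 :: real where K0: "dispersion C dx (of_real K0) = 0" by blast
  define B where "B = norm (C (-1) 0) + norm (C 1 0)"
  define R where "R = sqrt B + 1"
  have "0 \<le> B" unfolding B_def by simp
  then have "B < R^2" unfolding R_def by (simp add: power2_sum add_pos_nonneg)
  then have "dispersion C dx (of_real R) \<noteq> 0"
    using real_root_dispersion_bound[of C dx R] unfolding B_def by linarith
  have "\<not> dispersion C dx constant_on UNIV"
  proof
    assume "dispersion C dx constant_on UNIV"
    then obtain c where "\<And>z. dispersion C dx z = c" unfolding constant_on_def by blast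
    with K0 \<open>dispersion C dx (of_real R) \<noteq> 0\<close> show False by simp
  qed
  moreover have "dispersion C dx holomorphic_on UNIV"
    unfolding dispersion_def[abs_def] neighbour_symbol_def by (intro holomorphic_intros)
  ultimately have "finite {z \<in> cball 0 R. dispersion C dx z = 0}"
    by (intro holomorphic_compact_finite_zeros) auto
  then have "finite (of_real -` {z \<in> cball 0 R. dispersion C dx z = 0} :: real set)"
    by (rule finite_vimageI) (simp add: inj_def)
  moreover have "{K. dispersion C dx (of_real K) = 0} \<subseteq> of_real -` {z \<in> cball 0 R. dispersion C dx z = 0}"
  proof
    fix K assume "K \<in> {K. dispersion C dx (of_real K) = 0}"
    then have root: "dispersion C dx (of_real K) = 0" by simp
    then have "K^2 \<le> R^2" using real_root_dispersion_bound \<open>B < R^2\<close> unfolding B_def by fastforce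
    moreover have "0 < R" unfolding R_def by (simp add: add_nonneg_pos \<open>0 \<le> B\<close>)
    ultimately have "\<bar>K\<bar> \<le> R" using abs_le_square_iff[of K R] by simp
    with root show "K \<in> of_real -` {z \<in> cball 0 R. dispersion C dx z = 0}" by simp
  qed
  ultimately show ?thesis by (rule finite_subset[rotated])
qed simp

lemma dispersion_eq_0_if_plane_wave_solves_L1:
  assumes "std_brownian M W" and "0 < A"
    and "solves_L1 M W C \<sigma> (\<lambda>j t \<omega>. of_real A *
           exp (\<i> * of_real (K * (of_int j * dx) - (K^2 / 2) * t - \<sigma> * W t \<omega>)))"
  shows "dispersion C dx (of_real K) = 0"
proof (rule ccontr)
  assume nonzero: "dispersion C dx (of_real K) \<noteq> 0"
  interpret prob_space M using std_brownianD(1)[OF assms(1)] .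
  define E where "E \<omega> = phase (- (K^2 / 2)) (- \<sigma>) (\<lambda>r. W r \<omega>)" for \<omega>
  define u where "u j t \<omega> = of_real A * exp (\<i> * of_real (K * (of_int j * dx))) * E \<omega> t" for j t \<omega>
  have "solves_L1 M W C \<sigma> u"
    using assms(3) unfolding u_def E_def phase_def
    by (simp add: algebra_simps flip: exp_add)
  have sum_u: "(\<Sum>l\<in>nbr 0. C l 0 * u l s \<omega>) = of_real A * neighbour_symbol C dx (of_real K) * E \<omega> s"
    for s \<omega> unfolding u_def by (rule sum_nbr0_plane_wave)
  have integral_0: "AE \<omega> in M. integral {0..t} (E \<omega>) = 0" if "0 < t" for t
  proof -
    obtain I where strat: "strat_integral_is M W (u 0) t I"
      and L1: "AE \<omega> in M. \<i> * (u 0 t \<omega> - u 0 0 \<omega>)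
          = - (1/2) * integral {0..t} (\<lambda>s. \<Sum>l\<in>nbr 0. C l 0 * u l s \<omega>) + of_real \<sigma> * I \<omega>"
      using \<open>solves_L1 M W C \<sigma> u\<close> \<open>0 < t\<close> unfolding solves_L1_def by (meson less_imp_le)
    have "AE \<omega> in M. of_real A * (E \<omega> t - 1)
        = \<i> * of_real (- (K^2 / 2)) * of_real A * integral {0..t} (E \<omega>) + \<i> * of_real (- \<sigma>) * I \<omega>"
    proof -
      have u0: "u 0 = (\<lambda>s \<omega>. of_real A * phase (- (K^2 / 2)) (- \<sigma>) (\<lambda>r. W r \<omega>) s)"
        by (simp add: u_def E_def fun_eq_iff)
      show ?thesis
        using stratonovich_chain_rule_phase[OF assms(1) \<open>0 < t\<close> strat[unfolded u0]]
        unfolding E_def by simp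
    qed
    with L1 AE_space show ?thesis
    proof eventually_elim
      case (elim \<omega>)
      let ?L = "integral {0..t} (E \<omega>)"
      have L1': "\<i> * (of_real A * E \<omega> t - of_real A)
          = - (1/2) * (of_real A * neighbour_symbol C dx (of_real K) * ?L) + of_real \<sigma> * I \<omega>"
        using elim(1) phase_0[OF assms(1) elim(2)] unfolding sum_u
        by (simp add: u_def E_def)
      have "of_real A * dispersion C dx (of_real K) * ?L
          = 2 * (\<i> * (\<i> * of_real (- (K^2 / 2)) * of_real A * ?L + \<i> * of_real (- \<sigma>) * I \<omega>)
                 - (- (1/2) * (of_real A * neighbour_symbol C dx (of_real K) * ?L) + of_real \<sigma> * I \<omega>))"
        by (simp add: dispersion_def algebra_simps)
      also have "\<dots> = 2 * (\<i> * (of_real A * (E \<omega> t - 1)) - \<i> * (of_real A * E \<omega> t - of_real A))"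
        by (simp only: elim(3) L1')
      also have "\<dots> = 0" by (simp add: algebra_simps)
      finally show ?case using nonzero \<open>0 < A\<close> by simp
    qed
  qed
  have "AE \<omega> in M. \<forall>n. integral {0..1 / real (Suc n)} (E \<omega>) = 0"
    using integral_0 by (simp add: AE_all_countable)
  then obtain \<omega> where "\<omega> \<in> space M" and "\<forall>n. integral {0..1 / real (Suc n)} (E \<omega>) = 0"
    using eventually_happens'[OF ae_filter_bot] AE_space by (metis (mono_tags, lifting) eventually_conj)
  with integral_nonzero_near_0[OF continuous_on_phase[OF assms(1)] phase_0[OF assms(1)]]
  show False unfolding E_def by blast
qed

lemma zero_or_dispersion_eq_0_if_plane_wave_solves_L2:
  assumes "std_brownian M W" and "0 < A"
    and "solves_L2 M W C (\<lambda>j t \<omega>. of_real A *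
           exp (\<i> * of_real (K * (of_int j * dx) - (K^2 / 2) * W t \<omega>)))"
  shows "K = 0 \<or> dispersion C dx (of_real K) = 0"
proof (rule ccontr)
  assume "\<not> (K = 0 \<or> dispersion C dx (of_real K) = 0)"
  then have "K \<noteq> 0" and nonzero: "dispersion C dx (of_real K) \<noteq> 0" by auto
  interpret prob_space M using std_brownianD(1)[OF assms(1)] .
  define c where "c = neighbour_symbol C dx (of_real K)"
  define E where "E \<omega> = phase 0 (- (K^2 / 2)) (\<lambda>r. W r \<omega>)" for \<omega>
  define u where "u j t \<omega> = of_real A * exp (\<i> * of_real (K * (of_int j * dx))) * E \<omega> t" for j t \<omega>
  have "solves_L2 M W C u"
    using assms(3) unfolding u_def E_def phase_def
    by (simp add: algebra_simps flip: exp_add)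
  then obtain I where strat_u: "strat_integral_is M W (\<lambda>s \<omega>. \<Sum>l\<in>nbr 0. C l 0 * u l s \<omega>) 1 I"
    and L2: "AE \<omega> in M. \<i> * (u 0 1 \<omega> - u 0 0 \<omega>) = - (1/2) * I \<omega>"
    unfolding solves_L2_def by (meson zero_le_one)
  have "(\<lambda>s \<omega>. \<Sum>l\<in>nbr 0. C l 0 * u l s \<omega>)
      = (\<lambda>s \<omega>. (of_real A * c) * phase 0 (- (K^2 / 2)) (\<lambda>r. W r \<omega>) s)"
    unfolding u_def c_def E_def sum_nbr0_plane_wave ..
  note strat = strat_u[unfolded this]
  have "AE \<omega> in M. E \<omega> 1 = 1"
    using stratonovich_chain_rule_phase[OF assms(1) zero_less_one strat] L2 AE_space
  proof eventually_elim
    case (elim \<omega>)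
    have chain: "of_real A * c * (E \<omega> 1 - 1) = \<i> * of_real (- (K^2 / 2)) * I \<omega>"
      using elim(1) by (simp add: E_def)
    have L2': "\<i> * (of_real A * E \<omega> 1 - of_real A) = - (1/2) * I \<omega>"
      using elim(2) phase_0[OF assms(1) elim(3)] by (simp add: u_def E_def)
    have "of_real A * dispersion C dx (of_real K) * (E \<omega> 1 - 1)
        = (of_real A * c * (E \<omega> 1 - 1) - \<i> * of_real (- (K^2 / 2)) * I \<omega>)
          + \<i> * of_real (- (K^2 / 2)) * (I \<omega> + 2 * (\<i> * (of_real A * E \<omega> 1 - of_real A)))"
      by (simp add: dispersion_def c_def algebra_simps)
    also have "\<dots> = 0" by (simp add: chain L2')
    finally show ?case using nonzero \<open>0 < A\<close> by simp
  qed
  then have "AE \<omega> in M. exp (\<i> * of_real (- (K^2 / 2) * W 1 \<omega>)) = 1"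
    by (simp add: E_def phase_def)
  moreover have "- (K^2 / 2) \<noteq> 0" using \<open>K \<noteq> 0\<close> by simp
  ultimately show False using std_brownian_not_AE_exp_eq_1[OF assms(1)] by blast
qed

theorem mainTheorem1:
  fixes M :: "'a measure" and W :: "real \<Rightarrow> 'a \<Rightarrow> real"
    and dx \<sigma> :: real and C :: "int \<Rightarrow> int \<Rightarrow> complex"
  assumes "dx > 0" and "std_brownian M W"
  shows "finite {K::real. \<exists>A::real. A > 0 \<and>
            solves_L1 M W C \<sigma>
              (\<lambda>j t \<omega>. complex_of_real A *
                 exp (\<i> * complex_of_real (K * (of_int j * dx) - (K^2 / 2) * t - \<sigma> * W t \<omega>)))}
       \<and> finite {K::real. \<exists>A::real. A > 0 \<and>
            solves_L2 M W C
              (\<lambda>j t \<omega>. complex_of_real A *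
                 exp (\<i> * complex_of_real (K * (of_int j * dx) - (K^2 / 2) * W t \<omega>)))}"
proof
  note roots = finite_real_roots_dispersion[of C dx]
  show "finite {K::real. \<exists>A::real. A > 0 \<and>
            solves_L1 M W C \<sigma>
              (\<lambda>j t \<omega>. complex_of_real A *
                 exp (\<i> * complex_of_real (K * (of_int j * dx) - (K^2 / 2) * t - \<sigma> * W t \<omega>)))}"
    by (rule finite_subset[OF _ roots]) (auto dest: dispersion_eq_0_if_plane_wave_solves_L1[OF assms(2)])
  show "finite {K::real. \<exists>A::real. A > 0 \<and>
            solves_L2 M W C
              (\<lambda>j t \<omega>. complex_of_real A *
                 exp (\<i> * complex_of_real (K * (of_int j * dx) - (K^2 / 2) * W t \<omega>)))}"
    by (rule finite_subset[OF _ finite_insert[THEN iffD2, OF roots, of 0]])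
      (auto dest: zero_or_dispersion_eq_0_if_plane_wave_solves_L2[OF assms(2)])
qed

end
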